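(* For $|u|<1$, \[ - \operatorname{Li}_2 \left( \frac{2 u^2 - 3 u + \sqrt{ u (4-3u)}}{2 (u-1)^2} \right) - \operatorname{Li}_2 \left( \frac{2 u^2 - 3 u - \sqrt{ u (4-3u)}}{2 (u-1)^2} \right) = \frac{3}{2} \ln^2 \left( 1 - \frac{u - \sqrt{(4 - 3 u) u}}{2 (u-1)} \right) - \operatorname{Li}_2 \left( \frac{u}{u - 1} \right). \]
   Context: $\operatorname{Li}_2(x)=\sum_{n\ge1}x^n/n^2$ is the dilogarithm (analytically continued); square roots and logarithms are principal branches. *)

theory Defs
  imports "HOL-Analysis.Analysis"
begin

text \<open>Dilogarithm, principal branch (cut along [1,infinity)):
  Li2 z = - integral_0^z Ln(1-t)/t dt along the straight segment, i.e.
  after substituting t = z s, Li2 z = - integral_0^1 Ln(1 - z s)/s ds.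
  For norm z \<le> 1 this equals the power series sum z^n/n^2.\<close>
definition Li2 :: "complex \<Rightarrow> complex" where
  "Li2 z = - integral {0..1::real} (\<lambda>s. Ln (1 - z * of_real s) / of_real s)"

end

theory Submission
  imports Defs "HOL-Complex_Analysis.Complex_Analysis"
begin

text \<open>Let \<open>r = csqrt (u (4 - 3 u))\<close> and \<open>x = 1 - (u - r) / (2 (u - 1))\<close>. Then \<open>x\<close> and \<open>1 / x\<close>
  are the roots of the palindromic quadratic \<open>(u - 1) x\<^sup>2 - (u - 2) x + (u - 1)\<close>, and the
  arguments of \<open>Li2\<close> become \<open>x - x\<^sup>2\<close>, \<open>(x - 1) / x\<^sup>2\<close> and \<open>u / (u - 1) = - (x - 1)\<^sup>2 / x\<close>.
  So the theorem says that
  \<open>F x = Li2 (x - x\<^sup>2) + Li2 ((x - 1) / x\<^sup>2) - Li2 (- (x - 1)\<^sup>2 / x) + 3/2 (Ln x)\<^sup>2\<close> vanishes.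

  On the plane slit along \<open>[1, \<infinity>)\<close>, which is starlike about \<open>0\<close>, \<open>Li2\<close> is the integral of
  \<open>Li2' z = - Ln (1 - z) / z\<close> along the segment from \<open>0\<close>, hence a primitive of it. With
  \<open>y = x - 1 + 1 / x\<close> the numbers \<open>1 - z\<close> entering \<open>F'\<close> are \<open>x y\<close>, \<open>y / x\<close> and \<open>y\<close>, so
  where \<open>Re x\<close> and \<open>Re y\<close> are positive the logarithms split into \<open>Ln x\<close> and \<open>Ln y\<close>, and
  then \<open>F'\<close> cancels identically. This is the case on the region \<open>Re (x + 1 / x) > 1\<close>. It is
  open and connected (each of its points is joined to the positive real axis by a vertical
  segment inside it) and contains \<open>1\<close>, where \<open>F\<close> vanishes. Finally \<open>|u| < 1\<close> puts \<open>x\<close> in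
  this region, since \<open>x + 1 / x = 1 + 1 / (1 - u)\<close>.\<close>

definition Li2_domain :: "complex set" where
  "Li2_domain = {z. 1 - z \<notin> \<real>\<^sub>\<le>\<^sub>0}"

definition Li2_deriv :: "complex \<Rightarrow> complex" where
  "Li2_deriv z = (if z = 0 then 1 else - Ln (1 - z) / z)"

lemma open_Li2_domain: "open Li2_domain"
proof -
  have "Li2_domain = (\<lambda>z. 1 - z) -` (- \<real>\<^sub>\<le>\<^sub>0)"
    by (auto simp: Li2_domain_def)
  then show ?thesis
    by (metis closed_nonpos_Reals_complex open_Compl open_vimage continuous_on_op_minus)
qed

lemma zero_in_Li2_domain: "0 \<in> Li2_domain"
  by (simp add: Li2_domain_def)

lemma closed_segment_0_subset_Li2_domain:
  assumes "z \<in> Li2_domain"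
  shows "closed_segment 0 z \<subseteq> Li2_domain"
proof
  fix w assume "w \<in> closed_segment 0 z"
  then obtain t where t: "0 \<le> t" "t \<le> 1" "w = t *\<^sub>R z"
    by (auto simp: closed_segment_def)
  show "w \<in> Li2_domain"
    using assms t mult_left_le_one_le[of "Re z" t] mult_nonneg_nonpos[of t "Re z"]
    by (auto simp: Li2_domain_def complex_nonpos_Reals_iff) linarith
qed

lemma holomorphic_Li2_deriv: "Li2_deriv holomorphic_on Li2_domain"
proof (rule no_isolated_singularity'[where K = "{0}"])
  have "(\<lambda>z. - Ln (1 - z) / z) holomorphic_on Li2_domain - {0}"
    by (intro holomorphic_intros) (auto simp: Li2_domain_def)
  then show "Li2_deriv holomorphic_on Li2_domain - {0}"
    by (rule holomorphic_transform) (simp add: Li2_deriv_def)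
  have "((\<lambda>z. - Ln (1 - z)) has_field_derivative 1) (at 0)"
    by (auto intro!: derivative_eq_intros)
  then have "((\<lambda>z. - Ln (1 - z) / z) \<longlongrightarrow> 1) (at 0)"
    by (simp add: DERIV_def)
  then have "(Li2_deriv \<longlongrightarrow> 1) (at 0)"
    by (rule Lim_transform_eventually) (auto simp: eventually_at_filter Li2_deriv_def)
  then show "(Li2_deriv \<longlongrightarrow> Li2_deriv z) (at z within Li2_domain)" if "z \<in> {0}" for z
    using that tendsto_within_subset[OF _ subset_UNIV] by (simp add: Li2_deriv_def)
qed (use open_Li2_domain in auto)

lemma Li2_eq_contour_integral:
  assumes "z \<in> Li2_domain"
  shows "Li2 z = contour_integral (linepath 0 z) Li2_deriv"
proof -
  have "continuous_on (closed_segment 0 z) Li2_deriv"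
    using holomorphic_on_imp_continuous_on[OF holomorphic_Li2_deriv]
      closed_segment_0_subset_Li2_domain[OF assms] by (rule continuous_on_subset)
  then have integral: "((\<lambda>s. Li2_deriv (linepath 0 z s) * z) has_integral
               contour_integral (linepath 0 z) Li2_deriv) {0..1}"
    by (metis has_contour_integral_integral contour_integrable_continuous_linepath
        has_contour_integral_linepath diff_zero)
  have spike: "Ln (1 - z * of_real s) / of_real s = - (Li2_deriv (linepath 0 z s) * z)"
    if "s \<in> {0..1} - {0}" for s
    using that by (auto simp: Li2_deriv_def linepath_def scaleR_conv_of_real mult.commute)
  have "((\<lambda>s. Ln (1 - z * of_real s) / of_real s) has_integral
          - contour_integral (linepath 0 z) Li2_deriv) {0..1}"
    by (rule has_integral_spike_finite[of "{0}", OF _ spike has_integral_neg[OF integral]]) simp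
  then show ?thesis
    by (simp add: Li2_def integral_unique)
qed

lemma has_field_derivative_Li2:
  assumes "z \<in> Li2_domain"
  shows "(Li2 has_field_derivative Li2_deriv z) (at z)"
proof -
  have "((\<lambda>w. contour_integral (linepath 0 w) Li2_deriv) has_field_derivative Li2_deriv z) (at z)"
  proof (rule triangle_contour_integrals_starlike_primitive[OF
        holomorphic_on_imp_continuous_on[OF holomorphic_Li2_deriv] zero_in_Li2_domain
        open_Li2_domain assms closed_segment_0_subset_Li2_domain])
    fix b c assume "closed_segment b c \<subseteq> Li2_domain"
    then have "convex hull {0, b, c} \<subseteq> Li2_domain"
      by (intro starlike_convex_subset zero_in_Li2_domain closed_segment_0_subset_Li2_domain)
    then have "(Li2_deriv has_contour_integral 0) (linepath 0 b +++ linepath b c +++ linepath c 0)"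
      by (intro Cauchy_theorem_triangle holomorphic_on_subset[OF holomorphic_Li2_deriv])
    then show "contour_integral (linepath 0 b) Li2_deriv + contour_integral (linepath b c) Li2_deriv
               + contour_integral (linepath c 0) Li2_deriv = 0"
      by (rule has_chain_integral_chain_integral3)
  qed
  then show ?thesis
    by (rule has_field_derivative_transform_within_open[OF _ open_Li2_domain assms])
       (simp add: Li2_eq_contour_integral)
qed

lemma has_field_derivative_Li2_compose:
  assumes "(f has_field_derivative f') (at x)" "f x \<in> Li2_domain"
  shows "((\<lambda>x. Li2 (f x)) has_field_derivative Li2_deriv (f x) * f') (at x)"
  using DERIV_chain2[OF has_field_derivative_Li2[OF assms(2)] assms(1)] .

lemma Li2_deriv_mult: "z \<noteq> 0 \<Longrightarrow> Li2_deriv z * w = - Ln (1 - z) * (w / z)"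
  by (simp add: Li2_deriv_def)

lemma Re_add_inverse: "Re (x + inverse x) = Re x * (1 + 1 / (norm x)^2)"
  by (simp add: inverse_eq_divide Re_divide' distrib_left)

lemma Re_pos_of_Re_add_inverse_pos:
  assumes "0 < Re (x + inverse x)"
  shows "0 < Re x"
proof -
  have "0 < 1 + 1 / (norm x)^2"
    by (simp add: add_pos_nonneg)
  then show ?thesis
    using assms unfolding Re_add_inverse by (simp add: zero_less_mult_iff)
qed

lemma Re_add_inverse_le_on_vertical_segment:
  assumes "0 < Re x" "w \<in> closed_segment (of_real (Re x)) x"
  shows "Re (x + inverse x) \<le> Re (w + inverse w)"
proof -
  obtain t where t: "0 \<le> t" "t \<le> 1" and w: "w = (1 - t) *\<^sub>R of_real (Re x) + t *\<^sub>R x"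
    using assms(2) by (auto simp: closed_segment_def)
  have "Re w = Re x" "Im w = t * Im x"
    unfolding w by (simp_all add: left_diff_distrib)
  have "\<bar>Im w\<bar> \<le> \<bar>Im x\<bar>"
    using t \<open>Im w = t * Im x\<close> by (simp add: abs_mult mult_left_le_one_le)
  then have "norm w \<le> norm x"
    using \<open>Re w = Re x\<close> by (simp add: cmod_def abs_le_square_iff)
  moreover have "0 < norm w"
    using assms(1) \<open>Re w = Re x\<close> by auto
  ultimately have "1 / (norm x)^2 \<le> 1 / (norm w)^2"
    by (intro divide_left_mono power_mono mult_pos_pos) auto
  then show ?thesis
    using assms(1) \<open>Re w = Re x\<close> unfolding Re_add_inverse by simp
qed

lemma open_Re_add_inverse_gt:
  assumes "0 \<le> c"
  shows "open {x::complex. c < Re (x + inverse x)}"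
proof -
  have "open (- {0} \<inter> (\<lambda>x::complex. x + inverse x) -` {z. c < Re z})"
    by (intro continuous_open_preimage continuous_intros open_halfspace_Re_gt) auto
  also have "- {0} \<inter> (\<lambda>x. x + inverse x) -` {z. c < Re z} = {x. c < Re (x + inverse x)}"
    using assms by auto
  finally show ?thesis .
qed

lemma connected_Re_add_inverse_gt:
  assumes "0 \<le> c" "c < 2"
  shows "connected {x::complex. c < Re (x + inverse x)}"
proof -
  define W where "W = {x::complex. c < Re (x + inverse x)}"
  define P where "P = complex_of_real ` {0<..}"
  define V where "V = (\<lambda>x. closed_segment (complex_of_real (Re x)) x) ` W"
  have Re_pos: "0 < Re x" if "x \<in> W" for x
    using Re_pos_of_Re_add_inverse_pos[of x] that assms(1) unfolding W_def mem_Collect_eq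
    by linarith
  have "P \<subseteq> W"
  proof
    fix z assume "z \<in> P"
    then obtain p where "0 < p" "z = of_real p"
      by (auto simp: P_def)
    then show "z \<in> W"
      using plus_inverse_ge_2[of p] assms by (simp add: W_def power2_eq_square inverse_eq_divide)
  qed
  moreover have "closed_segment (of_real (Re x)) x \<subseteq> W" if "x \<in> W" for x
    using Re_add_inverse_le_on_vertical_segment[OF Re_pos[OF that]] that
    unfolding W_def by force
  ultimately have "W = P \<union> \<Union>V"
    by (auto simp: V_def intro: ends_in_segment)
  moreover have "connected (P \<union> \<Union>V)"
  proof (rule connected_Un_UN)
    show "connected P"
      unfolding P_def by (intro connected_continuous_image continuous_intros) simp
    show "connected X" if "X \<in> V" for X
      using that by (auto simp: V_def)
    show "P \<inter> X \<noteq> {}" if "X \<in> V" for X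
      using that Re_pos by (force simp: V_def P_def)
  qed
  ultimately have "connected W"
    by simp
  then show ?thesis
    by (simp only: W_def)
qed

lemma Ln_mult_of_Re_pos:
  assumes "0 < Re v" "0 < Re w"
  shows "Ln (v * w) = Ln v + Ln w"
  using Re_Ln_pos_lt_imp[OF assms(1)] Re_Ln_pos_lt_imp[OF assms(2)] assms
  by (intro Ln_times_simple) auto

lemma mult_notin_nonpos_Reals_of_Re_pos:
  assumes "0 < Re v" "0 < Re w"
  shows "v * w \<notin> \<real>\<^sub>\<le>\<^sub>0"
proof
  assume "v * w \<in> \<real>\<^sub>\<le>\<^sub>0"
  then obtain r where "r \<le> 0" "v * w = of_real r"
    by (auto elim!: nonpos_Reals_cases)
  moreover have "v \<noteq> 0"
    using assms by auto
  ultimately have "w = of_real r / v"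
    by (simp add: eq_divide_eq mult.commute)
  then have "Re w = r * Re v / (norm v)^2"
    by (simp add: Re_divide')
  also have "\<dots> \<le> 0"
    using \<open>r \<le> 0\<close> assms by (simp add: divide_nonpos_nonneg mult_nonpos_nonneg)
  finally show False using assms by simp
qed

definition Li2_three_term :: "complex \<Rightarrow> complex" where
  "Li2_three_term x =
     Li2 (x - x^2) + Li2 ((x - 1) / x^2) - Li2 (- ((x - 1)^2) / x) + 3/2 * (Ln x)^2"

lemma Li2_three_term_arguments:
  assumes "1 < Re (x + inverse x)"
  defines "y \<equiv> x - 1 + inverse x"
  shows "x \<notin> \<real>\<^sub>\<le>\<^sub>0"
    and "x - x^2 \<in> Li2_domain" "(x - 1) / x^2 \<in> Li2_domain" "- ((x - 1)^2) / x \<in> Li2_domain"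
    and "Ln (1 - (x - x^2)) = Ln x + Ln y" "Ln (1 - (x - 1) / x^2) = Ln y - Ln x"
      "Ln (1 - (- ((x - 1)^2) / x)) = Ln y"
proof -
  have "0 < Re x"
    using Re_pos_of_Re_add_inverse_pos[of x] assms by linarith
  then show "x \<notin> \<real>\<^sub>\<le>\<^sub>0"
    by (auto simp: complex_nonpos_Reals_iff)
  have "x \<noteq> 0" "0 < Re (inverse x)"
    using \<open>0 < Re x\<close> by (auto simp: add_pos_nonneg)
  have "0 < Re y"
    using assms by (simp add: y_def)
  have one_minus: "1 - (x - x^2) = x * y" "1 - (x - 1) / x^2 = y * inverse x"
    "1 - (- ((x - 1)^2) / x) = y"
    using \<open>x \<noteq> 0\<close> by (auto simp: y_def field_simps power2_eq_square)
  show "x - x^2 \<in> Li2_domain" "(x - 1) / x^2 \<in> Li2_domain" "- ((x - 1)^2) / x \<in> Li2_domain"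
    using mult_notin_nonpos_Reals_of_Re_pos[OF \<open>0 < Re x\<close> \<open>0 < Re y\<close>]
      mult_notin_nonpos_Reals_of_Re_pos[OF \<open>0 < Re y\<close> \<open>0 < Re (inverse x)\<close>] \<open>0 < Re y\<close>
    unfolding Li2_domain_def mem_Collect_eq one_minus by (auto simp: complex_nonpos_Reals_iff)
  show "Ln (1 - (x - x^2)) = Ln x + Ln y" "Ln (1 - (x - 1) / x^2) = Ln y - Ln x"
    "Ln (1 - (- ((x - 1)^2) / x)) = Ln y"
    unfolding one_minus
    using Ln_mult_of_Re_pos \<open>0 < Re x\<close> \<open>0 < Re y\<close> \<open>0 < Re (inverse x)\<close>
      Ln_inverse[OF \<open>x \<notin> \<real>\<^sub>\<le>\<^sub>0\<close>]
    by simp_all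
qed

lemma Li2_three_term_log_derivatives:
  fixes x :: complex
  assumes "x \<noteq> 0" "x \<noteq> 1"
  defines "q \<equiv> inverse (x * (x - 1))"
  shows "(1 - 2*x) / (x - x^2) = (2*x - 1) * q"
    and "((2 - x) / x^3) / ((x - 1) / x^2) = (2 - x) * q"
    and "(- ((x - 1) * (x + 1)) / x^2) / (- ((x - 1)^2) / x) = (x + 1) * q"
    and "inverse x = (x - 1) * q"
proof -
  have "x - 1 \<noteq> 0"
    using assms by simp
  then show "(1 - 2*x) / (x - x^2) = (2*x - 1) * q"
    "((2 - x) / x^3) / ((x - 1) / x^2) = (2 - x) * q" "inverse x = (x - 1) * q"
    using assms by (simp_all add: q_def field_simps power2_eq_square power3_eq_cube)
  show "(- ((x - 1) * (x + 1)) / x^2) / (- ((x - 1)^2) / x) = (x + 1) * q"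
    using assms \<open>x - 1 \<noteq> 0\<close> by (simp add: q_def field_simps) (simp add: power2_eq_square algebra_simps)
qed

lemma has_field_derivative_Li2_three_term:
  assumes "1 < Re (x + inverse x)"
  shows "(Li2_three_term has_field_derivative 0) (at x)"
proof -
  note args = Li2_three_term_arguments[OF assms]
  have "x \<noteq> 0"
    using args(1) by auto
  have "((\<lambda>x. Li2 (x - x^2)) has_field_derivative Li2_deriv (x - x^2) * (1 - 2*x)) (at x)"
    using args(2) by (auto intro!: has_field_derivative_Li2_compose derivative_eq_intros)
  moreover have "((\<lambda>x. Li2 ((x - 1) / x^2)) has_field_derivative
                   Li2_deriv ((x - 1) / x^2) * ((2 - x) / x^3)) (at x)"
    using args(3) \<open>x \<noteq> 0\<close> by (intro has_field_derivative_Li2_compose)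
      (auto intro!: derivative_eq_intros simp: field_simps power2_eq_square power3_eq_cube)
  moreover have "((\<lambda>x. Li2 (- ((x - 1)^2) / x)) has_field_derivative
                   Li2_deriv (- ((x - 1)^2) / x) * (- ((x - 1) * (x + 1)) / x^2)) (at x)"
    using args(4) \<open>x \<noteq> 0\<close> by (intro has_field_derivative_Li2_compose)
      (auto intro!: derivative_eq_intros simp: field_simps power2_eq_square)
  moreover have "((\<lambda>x. (Ln x)^2) has_field_derivative 2 * Ln x * inverse x) (at x)"
    using args(1) by (auto intro!: derivative_eq_intros)
  ultimately have "(Li2_three_term has_field_derivative
      Li2_deriv (x - x^2) * (1 - 2*x) + Li2_deriv ((x - 1) / x^2) * ((2 - x) / x^3)
      - Li2_deriv (- ((x - 1)^2) / x) * (- ((x - 1) * (x + 1)) / x^2)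
      + 3/2 * (2 * Ln x * inverse x)) (at x)"
    unfolding Li2_three_term_def[abs_def] by (intro DERIV_add DERIV_diff DERIV_cmult)
  moreover have "Li2_deriv (x - x^2) * (1 - 2*x) + Li2_deriv ((x - 1) / x^2) * ((2 - x) / x^3)
      - Li2_deriv (- ((x - 1)^2) / x) * (- ((x - 1) * (x + 1)) / x^2)
      + 3/2 * (2 * Ln x * inverse x) = 0"
  proof (cases "x = 1")
    case True
    then show ?thesis
      by (simp add: Li2_deriv_def)
  next
    case False
    then have "x - x^2 \<noteq> 0" "(x - 1) / x^2 \<noteq> 0" "- ((x - 1)^2) / x \<noteq> 0"
      using \<open>x \<noteq> 0\<close> by (auto simp: power2_eq_square right_diff_distrib[symmetric])
    \<comment> \<open>the logarithmic derivatives share the denominator \<open>x (x - 1)\<close>, and the coefficients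
      of \<open>Ln x\<close> and \<open>Ln y\<close> in the numerator cancel\<close>
    then show ?thesis
      unfolding Li2_deriv_mult[OF \<open>x - x^2 \<noteq> 0\<close>] Li2_deriv_mult[OF \<open>(x - 1) / x^2 \<noteq> 0\<close>]
        Li2_deriv_mult[OF \<open>- ((x - 1)^2) / x \<noteq> 0\<close>] args(5-7)
        Li2_three_term_log_derivatives[OF \<open>x \<noteq> 0\<close> False]
      by algebra
  qed
  ultimately show ?thesis
    by simp
qed

lemma Li2_three_term_eq_0:
  assumes "1 < Re (x + inverse x)"
  shows "Li2_three_term x = 0"
proof -
  have "Li2_three_term constant_on {x. 1 < Re (x + inverse x)}"
    using has_field_derivative_Li2_three_term
    by (intro has_field_derivative_0_imp_constant_on connected_Re_add_inverse_gt
        open_Re_add_inverse_gt) auto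
  moreover have "Li2_three_term 1 = 0"
    by (simp add: Li2_three_term_def Li2_def)
  ultimately show ?thesis
    using assms by (force simp: constant_on_def)
qed

lemma quadratic_root:
  fixes u r :: complex
  assumes "u \<noteq> 1" "r^2 = u * (4 - 3*u)"
  defines "x \<equiv> 1 - (u - r) / (2*(u - 1))"
  shows "(u - 1) * x^2 - (u - 2) * x + (u - 1) = 0"
proof -
  have "u - 1 \<noteq> 0"
    using assms by simp
  then show ?thesis
    using assms(2) unfolding x_def by (simp add: field_simps) algebra
qed

lemma quadratic_roots_mult:
  fixes u r :: complex
  assumes "u \<noteq> 1" "r^2 = u * (4 - 3*u)"
  shows "(1 - (u - r) / (2*(u - 1))) * (1 - (u + r) / (2*(u - 1))) = 1"
proof -
  have "u - 1 \<noteq> 0"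
    using assms by simp
  then show ?thesis
    using assms(2) by (simp add: field_simps) algebra
qed

lemma quadratic_root_diff_square:
  fixes u r :: complex
  assumes "u \<noteq> 1" "r^2 = u * (4 - 3*u)"
  defines "x \<equiv> 1 - (u - r) / (2*(u - 1))"
  shows "x - x^2 = (2*u^2 - 3*u + r) / (2*(u - 1)^2)"
proof -
  have "u - 1 \<noteq> 0"
    using assms by simp
  then show ?thesis
    using assms(2) unfolding x_def by (simp add: field_simps) algebra
qed

lemma palindromic_quadratic_root:
  fixes u x :: complex
  assumes "u \<noteq> 1" "(u - 1) * x^2 - (u - 2) * x + (u - 1) = 0"
  shows "x \<noteq> 0" "x + inverse x = 1 + inverse (1 - u)" "u / (u - 1) = - ((x - 1)^2) / x"
proof -
  have "u - 1 \<noteq> 0" "1 - u \<noteq> 0"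
    using assms by auto
  then show "x \<noteq> 0"
    using assms by auto
  show "x + inverse x = 1 + inverse (1 - u)"
    using assms \<open>x \<noteq> 0\<close> \<open>1 - u \<noteq> 0\<close> by (simp add: field_simps) algebra
  show "u / (u - 1) = - ((x - 1)^2) / x"
    using assms \<open>x \<noteq> 0\<close> \<open>u - 1 \<noteq> 0\<close> by (simp add: field_simps) algebra
qed

lemma quadratic_root_identities:
  fixes u r :: complex
  assumes "u \<noteq> 1" "r^2 = u * (4 - 3*u)"
  defines "x \<equiv> 1 - (u - r) / (2*(u - 1))"
  shows "(2*u^2 - 3*u + r) / (2*(u - 1)^2) = x - x^2"
    and "(2*u^2 - 3*u - r) / (2*(u - 1)^2) = (x - 1) / x^2"
    and "u / (u - 1) = - ((x - 1)^2) / x"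
    and "x + inverse x = 1 + inverse (1 - u)"
proof -
  have "(- r)^2 = u * (4 - 3*u)"
    using assms(2) by simp
  note root = palindromic_quadratic_root[OF assms(1) quadratic_root[OF assms(1,2)], folded x_def]
  then show "u / (u - 1) = - ((x - 1)^2) / x" "x + inverse x = 1 + inverse (1 - u)"
    by simp_all
  show "(2*u^2 - 3*u + r) / (2*(u - 1)^2) = x - x^2"
    using quadratic_root_diff_square[OF assms(1,2)] by (simp add: x_def)
  have "inverse x = 1 - (u + r) / (2*(u - 1))"
    using quadratic_roots_mult[OF assms(1,2)] by (simp add: x_def inverse_unique)
  then have "(2*u^2 - 3*u - r) / (2*(u - 1)^2) = inverse x - (inverse x)^2"
    using quadratic_root_diff_square[OF assms(1) \<open>(- r)^2 = u * (4 - 3*u)\<close>] by simp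
  also have "\<dots> = (x - 1) / x^2"
    using root(1) by (simp add: field_simps power2_eq_square)
  finally show "(2*u^2 - 3*u - r) / (2*(u - 1)^2) = (x - 1) / x^2" .
qed

theorem theorem3:
  fixes u :: complex
  assumes "norm u < 1"
  shows "- Li2 ((2*u^2 - 3*u + csqrt (u*(4 - 3*u))) / (2*(u - 1)^2))
         - Li2 ((2*u^2 - 3*u - csqrt (u*(4 - 3*u))) / (2*(u - 1)^2))
       = 3/2 * (Ln (1 - (u - csqrt ((4 - 3*u)*u)) / (2*(u - 1))))^2
         - Li2 (u / (u - 1))"
proof -
  define r where "r = csqrt (u * (4 - 3*u))"
  define x where "x = 1 - (u - r) / (2*(u - 1))"
  have "u \<noteq> 1"
    using assms by auto
  have "r^2 = u * (4 - 3*u)"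
    by (simp add: r_def)
  note identities = quadratic_root_identities[OF \<open>u \<noteq> 1\<close> this, folded x_def]
  have "0 < Re (1 - u)"
    using assms abs_Re_le_cmod[of u] by simp
  then have "1 < Re (x + inverse x)"
    by (simp add: identities(4) add_pos_nonneg)
  then have "Li2_three_term x = 0"
    by (rule Li2_three_term_eq_0)
  moreover have "1 - (u - csqrt ((4 - 3*u) * u)) / (2*(u - 1)) = x"
    by (simp add: x_def r_def mult.commute)
  ultimately show ?thesis
    unfolding r_def[symmetric] identities(1-3) Li2_three_term_def by algebra
qed

end
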